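(* Let $X_1,\dots,X_n\in\mathbb{R}^d$ be mutually orthogonal ($X_i^\top X_j=0$ for $i\ne j$), $y_1,\dots,y_n\in\mathbb{R}$, $m\ge1$. For $\mathbf U=(u_1,\dots,u_m)\in\mathbb{R}^{d\times m}$ let $$\ell(\mathbf U)=\frac1{2n}\sum_{j=1}^n\Big(\frac1{\sqrt m\,d}\sum_{i=1}^m(X_j^\top u_i)^2-y_j\Big)^2,$$ and run gradient descent $\mathbf U^{(t+1)}=\mathbf U^{(t)}-\eta\nabla\ell(\mathbf U^{(t)})$ with step-size $\eta>0$, where $\mathbf U^{(t)}=(u_1^{(t)},\dots,u_m^{(t)})$. Define $$e_i^{(t)}=\frac1{\sqrt m\,d}\sum_{j=1}^m(X_i^\top u_j^{(t)})^2-y_i,\quad z_i^{(t)}=\frac{2\eta\|X_i\|^2e_i^{(t)}}{\sqrt m\,dn},\quad a_i=\frac{2\eta\|X_i\|^2y_i}{\sqrt m\,dn}.$$ Then $z_i^{(t+1)}=f_{a_i}(z_i^{(t)})$ for all $i$ and $t$, where $f_a(z)=z\big(z^2+(a-2)z+1-2a\big)$. *)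

theory Defs
  imports "HOL-Analysis.Analysis"
begin

text \<open>Data: samples X j in R^d (index type 'd), labels y j, indexed by a finite type 'n
  (so n = CARD('n)). Weights U in R^(d x m): U :: real^'m^'d, column i U = u_i.\<close>

definition loss :: "('n::finite \<Rightarrow> real^'d::finite) \<Rightarrow> ('n \<Rightarrow> real) \<Rightarrow> real^'m::finite^'d \<Rightarrow> real" where
  "loss X y U = 1 / (2 * real CARD('n)) *
     (\<Sum>j\<in>UNIV. (1 / (sqrt (real CARD('m)) * real CARD('d)) *
        (\<Sum>i\<in>UNIV. (X j \<bullet> column i U)^2) - y j)^2)"

definition has_gradient_at :: "('a::real_inner \<Rightarrow> real) \<Rightarrow> 'a \<Rightarrow> 'a \<Rightarrow> bool" where
  "has_gradient_at f G x \<longleftrightarrow> (f has_derivative (\<lambda>h. h \<bullet> G)) (at x)"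

definition err :: "('n::finite \<Rightarrow> real^'d::finite) \<Rightarrow> ('n \<Rightarrow> real) \<Rightarrow> real^'m::finite^'d \<Rightarrow> 'n \<Rightarrow> real" where
  "err X y U i = 1 / (sqrt (real CARD('m)) * real CARD('d)) *
        (\<Sum>j\<in>UNIV. (X i \<bullet> column j U)^2) - y i"

definition zval :: "real \<Rightarrow> ('n::finite \<Rightarrow> real^'d::finite) \<Rightarrow> ('n \<Rightarrow> real) \<Rightarrow> real^'m::finite^'d \<Rightarrow> 'n \<Rightarrow> real" where
  "zval \<eta> X y U i = 2 * \<eta> * (norm (X i))^2 * err X y U i /
      (sqrt (real CARD('m)) * real CARD('d) * real CARD('n))"

definition aval :: "real \<Rightarrow> ('n::finite \<Rightarrow> real^'d::finite) \<Rightarrow> ('n \<Rightarrow> real) \<Rightarrow> 'm::finite itself \<Rightarrow> 'n \<Rightarrow> real" where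
  "aval \<eta> X y _ i = 2 * \<eta> * (norm (X i))^2 * y i /
      (sqrt (real CARD('m)) * real CARD('d) * real CARD('n))"

definition fa :: "real \<Rightarrow> real \<Rightarrow> real" where
  "fa a z = z * (z^2 + (a - 2) * z + 1 - 2 * a)"

end

theory Submission
  imports Defs
begin

(* The gradient of the loss with respect to the column u_i is
   (2 / (n sqrt(m) d)) * sum_j e_j (X_j . u_i) X_j.  By orthogonality, pairing it with X_k
   isolates the k-th summand, so one gradient step multiplies every projection X_k . u_i
   by the common factor 1 - z_k.  Hence e_k + y_k is multiplied by (1 - z_k)^2, i.e.
   z_k' + a_k = (1 - z_k)^2 (z_k + a_k), which is z_k' = f_(a_k)(z_k). *)

definition single_column :: "'m::finite \<Rightarrow> real^'d::finite \<Rightarrow> real^'m^'d" where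
  "single_column i x = (\<chi> r j. if j = i then x $ r else 0)"

lemma column_single_column: "column j (single_column i x) = (if j = i then x else 0)"
  by (simp add: single_column_def column_def vec_eq_iff)

lemma single_column_inner: "single_column i x \<bullet> A = x \<bullet> column i A"
  by (simp add: single_column_def column_def inner_vec_def if_distrib[where f = "\<lambda>c. c * _"]
      cong: if_cong)

lemma bounded_linear_inner_column:
  "bounded_linear (\<lambda>U::real^'m::finite^'d::finite. x \<bullet> column i U)"
proof -
  have "linear (\<lambda>U::real^'m^'d. x \<bullet> column i U)"
    by (rule linearI)
      (simp_all add: column_def inner_vec_def sum.distrib algebra_simps sum_distrib_left)
  then show ?thesis
    by (rule linear_conv_bounded_linear[THEN iffD1])
qed

lemma inner_column_diff_scaleR:
  "x \<bullet> column i (U - c *\<^sub>R V) = x \<bullet> column i U - c * (x \<bullet> column i V)"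
  by (simp add: column_def inner_vec_def sum_subtractf sum_distrib_left algebra_simps)

lemma loss_eq_sum_err:
  "loss X y U = 1 / (2 * real CARD('n)) * (\<Sum>j\<in>UNIV. (err X y U j)\<^sup>2)"
  for X :: "'n::finite \<Rightarrow> real^'d::finite" and U :: "real^'m::finite^'d"
  by (simp add: loss_def err_def)

lemma err_has_derivative:
  fixes X :: "'n::finite \<Rightarrow> real^'d::finite" and U :: "real^'m::finite^'d"
  shows "((\<lambda>U. err X y U j) has_derivative (\<lambda>h. 1 / (sqrt (real CARD('m)) * real CARD('d)) *
     (\<Sum>i\<in>UNIV. 2 * (X j \<bullet> column i U) * (X j \<bullet> column i h)))) (at U)"
  unfolding err_def
  by (rule bounded_linear.has_derivative[OF bounded_linear_inner_column]
        | rule derivative_eq_intros | simp)+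
    (simp add: fun_eq_iff mult_ac)

lemma loss_has_derivative:
  fixes X :: "'n::finite \<Rightarrow> real^'d::finite" and U :: "real^'m::finite^'d"
  shows "(loss X y has_derivative (\<lambda>h. 1 / real CARD('n) *
     (\<Sum>j\<in>UNIV. err X y U j * (1 / (sqrt (real CARD('m)) * real CARD('d)) *
        (\<Sum>i\<in>UNIV. 2 * (X j \<bullet> column i U) * (X j \<bullet> column i h)))))) (at U)"
  unfolding loss_eq_sum_err[abs_def]
  by (rule err_has_derivative derivative_eq_intros refl | simp)+
    (simp add: fun_eq_iff sum_divide_distrib algebra_simps)

lemma inner_column_gradient_loss:
  fixes X :: "'n::finite \<Rightarrow> real^'d::finite" and U G :: "real^'m::finite^'d"
  assumes orth: "\<And>i j. i \<noteq> j \<Longrightarrow> X i \<bullet> X j = 0"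
    and grad: "has_gradient_at (loss X y) G U"
  shows "X k \<bullet> column i G = 2 * (norm (X k))\<^sup>2 * err X y U k * (X k \<bullet> column i U) /
    (sqrt (real CARD('m)) * real CARD('d) * real CARD('n))"
proof -
  define c where "c = 1 / (sqrt (real CARD('m)) * real CARD('d))"
  have pairing: "h \<bullet> G = 1 / real CARD('n) *
     (\<Sum>j\<in>UNIV. err X y U j * (c * (\<Sum>i\<in>UNIV. 2 * (X j \<bullet> column i U) * (X j \<bullet> column i h))))"
    for h
    using has_derivative_unique[OF grad[unfolded has_gradient_at_def] loss_has_derivative]
    unfolding c_def by metis
  have "X k \<bullet> column i G = single_column i (X k) \<bullet> G"
    by (simp add: single_column_inner)
  also have "\<dots> = 1 / real CARD('n) *
     (\<Sum>j\<in>UNIV. err X y U j * (c * (2 * (X j \<bullet> column i U) * (X j \<bullet> X k))))"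
    unfolding pairing by (simp add: column_single_column if_distrib sum.delta cong: if_cong)
  also have "\<dots> = 1 / real CARD('n) * (err X y U k * (c * (2 * (X k \<bullet> column i U) * (norm (X k))\<^sup>2)))"
  proof -
    have inner_Xk: "X j \<bullet> X k = (if j = k then (norm (X k))\<^sup>2 else 0)" for j
      using orth by (simp add: power2_norm_eq_inner)
    show ?thesis
      unfolding inner_Xk by (simp add: if_distrib sum.delta cong: if_cong)
  qed
  finally show ?thesis
    by (simp add: c_def field_simps)
qed

lemma inner_column_gradient_step:
  fixes X :: "'n::finite \<Rightarrow> real^'d::finite" and U G :: "real^'m::finite^'d"
  assumes "\<And>i j. i \<noteq> j \<Longrightarrow> X i \<bullet> X j = 0"
    and "has_gradient_at (loss X y) G U"
  shows "X k \<bullet> column i (U - \<eta> *\<^sub>R G) = (1 - zval \<eta> X y U k) * (X k \<bullet> column i U)"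
  by (simp add: inner_column_diff_scaleR inner_column_gradient_loss[OF assms] zval_def field_simps)

lemma err_add_label_scale:
  fixes X :: "'n::finite \<Rightarrow> real^'d::finite" and U V :: "real^'m::finite^'d"
  assumes "\<And>i. X k \<bullet> column i V = s * (X k \<bullet> column i U)"
  shows "err X y V k + y k = s\<^sup>2 * (err X y U k + y k)"
  by (simp add: err_def assms power_mult_distrib sum_distrib_left)

lemma zval_add_aval:
  fixes X :: "'n::finite \<Rightarrow> real^'d::finite" and U :: "real^'m::finite^'d"
  shows "zval \<eta> X y U k + aval \<eta> X y TYPE('m) k = 2 * \<eta> * (norm (X k))\<^sup>2 * (err X y U k + y k) /
      (sqrt (real CARD('m)) * real CARD('d) * real CARD('n))"
  by (simp add: zval_def aval_def add_divide_distrib algebra_simps)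

lemma fa_eq: "fa a z = (1 - z)\<^sup>2 * (z + a) - a"
  by (simp add: fa_def algebra_simps power2_eq_square power3_eq_cube)

theorem theorem4:
  fixes X :: "'n::finite \<Rightarrow> real^'d::finite" and y :: "'n \<Rightarrow> real"
    and Us :: "nat \<Rightarrow> real^'m::finite^'d" and G :: "nat \<Rightarrow> real^'m^'d"
    and \<eta> :: real
  assumes orth: "\<And>i j. i \<noteq> j \<Longrightarrow> X i \<bullet> X j = 0"
    and eta: "\<eta> > 0"
    and grad: "\<And>t. has_gradient_at (loss X y) (G t) (Us t)"
    and gd: "\<And>t. Us (Suc t) = Us t - \<eta> *\<^sub>R G t"
  shows "\<forall>i t. zval \<eta> X y (Us (Suc t)) i = fa (aval \<eta> X y TYPE('m) i) (zval \<eta> X y (Us t) i)"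
proof (intro allI)
  fix k t
  let ?z = "zval \<eta> X y (Us t) k" and ?a = "aval \<eta> X y TYPE('m) k"
  have "err X y (Us (Suc t)) k + y k = (1 - ?z)\<^sup>2 * (err X y (Us t) k + y k)"
    by (rule err_add_label_scale) (simp add: gd inner_column_gradient_step[OF orth grad])
  then have "zval \<eta> X y (Us (Suc t)) k + ?a = (1 - ?z)\<^sup>2 * (?z + ?a)"
    by (simp add: zval_add_aval)
  then show "zval \<eta> X y (Us (Suc t)) k = fa ?a ?z"
    by (simp add: fa_eq)
qed

end
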